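(* Let $f:[0,\infty)\to\mathbb{C}$ be smooth with support in $[0,\rho]$ for some $\rho<1$, and for $j\in\mathbb{N}_0$, $t\in(0,1)$ let $$G_{0,j}(t)=\int_{1-t}^{1}u f(u)\,(u^{2}+1-t^{2})^{j}\,\mathrm{d}u.$$ Then for every $r\geq 0$ and $t\in(0,1)$, $$\left[\frac{\mathrm{d}}{\mathrm{d} t}D^{r}G_{0,r}\right](t)=2^{r}(-1)^{r}r!\sum_{m=0}^{r}\sum_{\nu=m}^{r}\sum_{l=\nu}^{r}\frac{1}{2^{\nu-m}m!}\binom{l+1}{\nu+1}\binom{l+\nu-m}{\nu-m}\frac{1}{t^{l}}\frac{(1-t)^{\nu+1}}{t^{\nu-m}}f^{(m)}(1-t).$$
   Context: $D$ denotes the operator $(D\varphi)(t)=\frac{1}{t}\varphi'(t)$ and $D^{r}$ its $r$-fold iterate ($D^0$ is the identity). $\binom{a}{b}=0$ if $b>a$ or $b<0$. *)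

theory Defs
  imports "HOL-Analysis.Analysis"
begin

definition Dop :: "(real \<Rightarrow> complex) \<Rightarrow> real \<Rightarrow> complex" where
  "Dop \<phi> = (\<lambda>t. (1 / t) *\<^sub>R vector_derivative \<phi> (at t))"

definition G0 :: "(real \<Rightarrow> complex) \<Rightarrow> nat \<Rightarrow> real \<Rightarrow> complex" where
  "G0 f j t = integral {1 - t..1} (\<lambda>u. complex_of_real (u * (u\<^sup>2 + 1 - t\<^sup>2) ^ j) * f u)"

end

theory Submission
  imports Defs
begin

(* Since (d/dt) G_{0,j}(t) = 2^j (1 - t)^(j+1) f(1 - t) - 2 j t G_{0,j-1}(t), we have
     D G_{0,j} = 2^j h_j - 2 j G_{0,j-1},   h_j(s) = (1 - s)^(j+1) f(1 - s) / s,
   so D^k G_{0,j} is an explicit combination of the D^(k-1-i) h_(j-i) and of G_{0,j-k}; for k = j + 1 only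
   the h-terms survive.  D^k applied to g(s)/s is a combination, with Bessel-polynomial coefficients, of the
   g^(k-q)(s) / s^(1+k+q), and the derivatives of (1 - s)^(j+1) f(1 - s) are given by Leibniz's rule. *)

lemma Dop_funpow_eq:
  assumes S: "open S" "0 \<notin> S"
    and start: "\<And>s. s \<in> S \<Longrightarrow> \<psi> s = \<phi> 0 s"
    and tower: "\<And>k s. s \<in> S \<Longrightarrow> (\<phi> k has_vector_derivative s *\<^sub>R \<phi> (Suc k) s) (at s)"
    and s: "s \<in> S"
  shows "(Dop ^^ k) \<psi> s = \<phi> k s"
  using s
proof (induction k arbitrary: s)
  case 0
  then show ?case by (simp add: start)
next
  case (Suc k)
  have "((Dop ^^ k) \<psi> has_vector_derivative s *\<^sub>R \<phi> (Suc k) s) (at s)"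
    using has_vector_derivative_transform_within_open[OF tower[OF Suc.prems] S(1) Suc.prems] Suc.IH
    by metis
  then have "vector_derivative ((Dop ^^ k) \<psi>) (at s) = s *\<^sub>R \<phi> (Suc k) s"
    by (rule vector_derivative_at)
  moreover have "s \<noteq> 0"
    using S(2) Suc.prems by auto
  moreover have "(Dop ^^ Suc k) \<psi> s = (1 / s) *\<^sub>R vector_derivative ((Dop ^^ k) \<psi>) (at s)"
    by (simp only: funpow.simps o_apply Dop_def[of "(Dop ^^ k) \<psi>"])
  ultimately show ?case
    by simp
qed

lemma Dop_funpow_has_vector_derivative:
  assumes S: "open S" "0 \<notin> S"
    and start: "\<And>s. s \<in> S \<Longrightarrow> \<psi> s = \<phi> 0 s"
    and tower: "\<And>k s. s \<in> S \<Longrightarrow> (\<phi> k has_vector_derivative s *\<^sub>R \<phi> (Suc k) s) (at s)"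
    and s: "s \<in> S"
  shows "((Dop ^^ k) \<psi> has_vector_derivative s *\<^sub>R \<phi> (Suc k) s) (at s)"
proof (rule has_vector_derivative_transform_within_open[OF tower[OF s, of k] S(1) s])
  show "\<phi> k y = (Dop ^^ k) \<psi> y" if "y \<in> S" for y
    using Dop_funpow_eq[where \<phi>=\<phi> and \<psi>=\<psi>, OF S start tower that] by simp
qed

lemma pochhammer_minus_of_nat:
  "pochhammer (- of_nat n) k = ((-1) ^ k * fact k * of_nat (n choose k) :: 'a::field_char_0)"
proof -
  have "(-1) ^ k * (-1) ^ k = (1 :: 'a)"
    by (simp flip: power_mult_distrib)
  then show ?thesis
    by (simp add: binomial_gbinomial gbinomial_pochhammer)
qed

lemma pochhammer_minus_of_nat_Suc:
  "pochhammer (- of_nat m) (Suc p) = - real (m - p) * pochhammer (- of_nat m :: real) p"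
  by (cases p m rule: linorder_cases)
    (simp_all add: pochhammer_Suc pochhammer_of_nat_eq_0_lemma pochhammer_same)

lemma pochhammer_minus_of_nat_diff_fact:
  assumes "l \<le> r"
  shows "pochhammer (- of_nat r) (r - l) * ((-1) ^ l * fact l) = ((-1) ^ r * fact r :: real)"
proof -
  have "real (r choose (r - l)) * fact (r - l) * fact l = fact r"
    using binomial_fact[of "r - l" r, where 'a=real] assms by (simp add: field_simps)
  moreover have "(-1) ^ (r - l) * (-1) ^ l = ((-1) ^ r :: real)"
    using assms by (simp flip: power_add)
  ultimately show ?thesis
    by (simp only: pochhammer_minus_of_nat) (simp add: mult_ac)
qed

lemma sum_choose_Suc_split:
  fixes Y :: "nat \<Rightarrow> 'a::real_vector"
  shows "(\<Sum>p\<le>Suc n. real (Suc n choose p) *\<^sub>R Y p)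
       = (\<Sum>p\<le>n. real (n choose p) *\<^sub>R Y (Suc p)) + (\<Sum>p\<le>n. real (n choose p) *\<^sub>R Y p)"
proof -
  have "(\<Sum>p\<le>Suc n. real (Suc n choose p) *\<^sub>R Y p)
      = Y 0 + (\<Sum>p\<le>n. real (Suc n choose Suc p) *\<^sub>R Y (Suc p))"
    by (subst sum.atMost_Suc_shift) simp
  also have "\<dots> = (\<Sum>p\<le>n. real (n choose p) *\<^sub>R Y (Suc p))
      + (Y 0 + (\<Sum>p\<le>n. real (n choose Suc p) *\<^sub>R Y (Suc p)))"
    by (simp add: scaleR_add_left sum.distrib)
  also have "Y 0 + (\<Sum>p\<le>n. real (n choose Suc p) *\<^sub>R Y (Suc p)) = (\<Sum>p\<le>Suc n. real (n choose p) *\<^sub>R Y p)"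
    by (subst sum.atMost_Suc_shift) simp
  finally show ?thesis
    by simp
qed

lemma sum_simplex_reorder:
  fixes Y :: "nat \<Rightarrow> nat \<Rightarrow> nat \<Rightarrow> 'a::comm_monoid_add"
  shows "(\<Sum>l\<le>r. \<Sum>m=0..l. \<Sum>n=m..l. Y m n l) = (\<Sum>m=0..r. \<Sum>n=m..r. \<Sum>l=n..r. Y m n l)"
proof -
  have "(\<Sum>(l,m,n)\<in>(SIGMA l:{..r}. SIGMA m:{0..l}. {m..l}). Y m n l)
      = (\<Sum>(m,n,l)\<in>(SIGMA m:{0..r}. SIGMA n:{m..r}. {n..r}). Y m n l)"
    by (rule sum.reindex_bij_witness[where i="\<lambda>(m,n,l). (l,m,n)" and j="\<lambda>(l,m,n). (m,n,l)"]) auto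
  then show ?thesis
    by (simp add: sum.Sigma)
qed

lemma sum_binomial_absorb_comp:
  fixes X :: "nat \<Rightarrow> 'a::real_vector"
  shows "(\<Sum>i\<le>j. (real (j choose i) * real (j - i)) *\<^sub>R X i)
       = real j *\<^sub>R (\<Sum>i\<le>j - 1. real ((j - 1) choose i) *\<^sub>R X i)"
proof (cases j)
  case (Suc j')
  have "real (j choose i) * real (j - i) = real j * real (j' choose i)" for i
    using binomial_absorb_comp[of j i] Suc by (metis diff_Suc_1 mult.commute of_nat_mult)
  then have "(\<Sum>i\<le>j. (real (j choose i) * real (j - i)) *\<^sub>R X i)
      = (\<Sum>i\<le>j. real j *\<^sub>R (real (j' choose i) *\<^sub>R X i))"
    by (intro sum.cong refl) (simp only: scaleR_scaleR)
  also have "\<dots> = real j *\<^sub>R (\<Sum>i\<le>j'. real (j' choose i) *\<^sub>R X i)"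
    using Suc by (simp add: scaleR_sum_right)
  finally show ?thesis
    using Suc by simp
qed simp

lemma odd_power_binomial:
  fixes u c :: real
  shows "u * (u\<^sup>2 + c) ^ j = (\<Sum>i\<le>j. real (j choose i) * c ^ (j - i) * u ^ (2 * i + 1))"
  unfolding binomial_ring sum_distrib_left
  by (intro sum.cong refl) (simp add: power_add algebra_simps flip: power_mult)

definition leibniz_sum ::
    "(nat \<Rightarrow> real \<Rightarrow> real) \<Rightarrow> (nat \<Rightarrow> real \<Rightarrow> 'a::real_vector) \<Rightarrow> nat \<Rightarrow> real \<Rightarrow> 'a" where
  "leibniz_sum u v n s = (\<Sum>p\<le>n. (real (n choose p) * u p s) *\<^sub>R v (n - p) s)"

lemma leibniz_sum_has_vector_derivative:
  assumes u: "\<And>p. (u p has_real_derivative u (Suc p) s) (at s)"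
    and v: "\<And>q. (v q has_vector_derivative v (Suc q) s) (at s)"
  shows "(leibniz_sum u v n has_vector_derivative leibniz_sum u v (Suc n) s) (at s)"
proof -
  define Y where "Y p = u p s *\<^sub>R v (Suc n - p) s" for p
  have "((\<lambda>s. (real (n choose p) * u p s) *\<^sub>R v (n - p) s) has_vector_derivative
      real (n choose p) *\<^sub>R Y (Suc p) + real (n choose p) *\<^sub>R Y p) (at s)" if "p \<le> n" for p
  proof -
    have "Suc n - Suc p = n - p" "Suc n - p = Suc (n - p)"
      using that by auto
    then show ?thesis
      unfolding Y_def
      by (auto intro!: derivative_eq_intros u v simp: algebra_simps)
  qed
  then have "(leibniz_sum u v n has_vector_derivative
      (\<Sum>p\<le>n. real (n choose p) *\<^sub>R Y (Suc p) + real (n choose p) *\<^sub>R Y p)) (at s)"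
    unfolding leibniz_sum_def [abs_def] by (intro has_vector_derivative_sum) auto
  moreover have "leibniz_sum u v (Suc n) s = (\<Sum>p\<le>Suc n. real (Suc n choose p) *\<^sub>R Y p)"
    by (simp only: leibniz_sum_def Y_def scaleR_scaleR)
  ultimately show ?thesis
    by (simp only: sum_choose_Suc_split sum.distrib)
qed

lemma pochhammer_power_has_real_derivative:
  "((\<lambda>s. pochhammer (- of_nat m) p * (1 - s) ^ (m - p)) has_real_derivative
     pochhammer (- of_nat m) (Suc p) * (1 - s) ^ (m - Suc p)) (at s)"
proof -
  have "((\<lambda>s. (1 - s) ^ (m - p)) has_real_derivative - real (m - p) * (1 - s) ^ (m - p - 1)) (at s)"
    by (auto intro!: derivative_eq_intros)
  note DERIV_cmult[OF this, of "pochhammer (- of_nat m) p"]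
  moreover have "m - p - 1 = m - Suc p"
    by simp
  ultimately show ?thesis
    by (simp only: pochhammer_minus_of_nat_Suc mult_ac)
qed

(* If A n is the n-th derivative of g, then bessel_sum A k = D^k (g(s) / s).  The bessel_coeff k q
   = (k + q)! / ((k - q)! q! 2^q) are the coefficients of the Bessel polynomial of degree k. *)
fun bessel_coeff :: "nat \<Rightarrow> nat \<Rightarrow> real" where
  "bessel_coeff 0 q = (if q = 0 then 1 else 0)"
| "bessel_coeff (Suc k) q =
     bessel_coeff k q + (if q = 0 then 0 else (real k + real q) * bessel_coeff k (q - 1))"

lemma bessel_coeff_eq_0: "k < q \<Longrightarrow> bessel_coeff k q = 0"
  by (induction k arbitrary: q) auto

lemma bessel_coeff_0_right [simp]: "bessel_coeff k 0 = 1"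
  by (induction k) auto

lemma bessel_coeff_fact:
  "q \<le> k \<Longrightarrow> bessel_coeff k q * (fact (k - q) * fact q * 2 ^ q) = fact (k + q)"
proof (induction k arbitrary: q)
  case 0
  then show ?case by simp
next
  case (Suc k)
  show ?case
  proof (cases q)
    case 0
    then show ?thesis by simp
  next
    case (Suc q')
    with Suc.prems have "q' \<le> k"
      by simp
    have first: "bessel_coeff k (Suc q') * (fact (k - q') * fact (Suc q') * 2 ^ Suc q')
        = real (k - q') * fact (k + Suc q')"
    proof (cases "q' = k")
      case False
      with \<open>q' \<le> k\<close> have "Suc q' \<le> k" "fact (k - q') = real (k - q') * fact (k - Suc q')"
        by (simp_all add: fact_reduce Suc_diff_Suc)
      with Suc.IH[of "Suc q'"] show ?thesis
        by (metis mult.left_commute mult.assoc)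
    qed (simp add: bessel_coeff_eq_0)
    have "bessel_coeff (Suc k) q * (fact (Suc k - q) * fact q * 2 ^ q)
       = bessel_coeff k (Suc q') * (fact (k - q') * fact (Suc q') * 2 ^ Suc q')
         + (real k + real (Suc q')) * (2 * real (Suc q'))
           * (bessel_coeff k q' * (fact (k - q') * fact q' * 2 ^ q'))"
      using Suc by (simp add: algebra_simps)
    also have "\<dots> = real (k - q') * fact (k + Suc q')
         + (real k + real (Suc q')) * (2 * real (Suc q')) * fact (k + q')"
      by (simp only: first Suc.IH[OF \<open>q' \<le> k\<close>])
    also have "\<dots> = fact (Suc k + q)"
      using Suc \<open>q' \<le> k\<close> by (simp add: algebra_simps)
    finally show ?thesis .
  qed
qed

lemma has_real_derivative_divide_power:
  "s \<noteq> 0 \<Longrightarrow> ((\<lambda>s. c / s ^ n) has_real_derivative - real n * c / s ^ Suc n) (at s)"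
  by (auto intro!: derivative_eq_intros) (cases n; simp add: field_simps)

definition bessel_sum :: "(nat \<Rightarrow> real \<Rightarrow> 'a::real_normed_vector) \<Rightarrow> nat \<Rightarrow> real \<Rightarrow> 'a" where
  "bessel_sum A k s = (\<Sum>q\<le>k. ((-1) ^ q * bessel_coeff k q / s ^ (1 + k + q)) *\<^sub>R A (k - q) s)"

lemma bessel_sum_has_vector_derivative:
  assumes A: "\<And>n. (A n has_vector_derivative A (Suc n) s) (at s)" and s: "s \<noteq> 0"
  shows "(bessel_sum A k has_vector_derivative s *\<^sub>R bessel_sum A (Suc k) s) (at s)"
proof -
  define c where "c q = (-1) ^ q * bessel_coeff k q" for q
  have "((\<lambda>s. (c q / s ^ (1 + k + q)) *\<^sub>R A (k - q) s) has_vector_derivative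
      (c q / s ^ (1 + k + q)) *\<^sub>R A (Suc (k - q)) s
      + (- real (1 + k + q) * c q / s ^ Suc (1 + k + q)) *\<^sub>R A (k - q) s) (at s)" for q
    by (rule has_vector_derivative_scaleR[OF has_real_derivative_divide_power[OF s] A])
  then have "(bessel_sum A k has_vector_derivative
      (\<Sum>q\<le>k. (c q / s ^ (1 + k + q)) *\<^sub>R A (Suc (k - q)) s)
      + (\<Sum>q\<le>k. (- real (1 + k + q) * c q / s ^ Suc (1 + k + q)) *\<^sub>R A (k - q) s)) (at s)"
    unfolding bessel_sum_def [abs_def] c_def [symmetric] sum.distrib [symmetric]
    by (intro has_vector_derivative_sum)
  moreover have "s * ((-1) ^ q * bessel_coeff (Suc k) q / s ^ (1 + Suc k + q))
      = c q / s ^ (1 + k + q)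
        + (if q = 0 then 0 else - real (k + q) * c (q - 1) / s ^ (1 + k + q))" for q
    using s by (cases q) (simp_all add: c_def field_simps)
  then have "s *\<^sub>R bessel_sum A (Suc k) s
      = (\<Sum>q\<le>Suc k. (c q / s ^ (1 + k + q)) *\<^sub>R A (Suc k - q) s)
      + (\<Sum>q\<le>Suc k. (if q = 0 then 0 else - real (k + q) * c (q - 1) / s ^ (1 + k + q))
           *\<^sub>R A (Suc k - q) s)"
    by (simp only: bessel_sum_def scaleR_sum_right scaleR_scaleR scaleR_add_left sum.distrib)
  moreover have "(\<Sum>q\<le>Suc k. (c q / s ^ (1 + k + q)) *\<^sub>R A (Suc k - q) s)
      = (\<Sum>q\<le>k. (c q / s ^ (1 + k + q)) *\<^sub>R A (Suc (k - q)) s)"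
    by (simp add: c_def bessel_coeff_eq_0 Suc_diff_le)
  moreover have "(\<Sum>q\<le>Suc k. (if q = 0 then 0 else - real (k + q) * c (q - 1) / s ^ (1 + k + q))
           *\<^sub>R A (Suc k - q) s)
      = (\<Sum>q\<le>k. (- real (1 + k + q) * c q / s ^ Suc (1 + k + q)) *\<^sub>R A (k - q) s)"
    by (subst sum.atMost_Suc_shift) simp
  ultimately show ?thesis
    by simp
qed

(* The binomial expansion of (u^2 + (1 - s^2))^j separates the variables in G_{0,j}. *)
definition odd_moment_tail :: "(real \<Rightarrow> 'a::banach) \<Rightarrow> nat \<Rightarrow> real \<Rightarrow> 'a" where
  "odd_moment_tail f i x = integral {x..1} (\<lambda>u. u ^ (2 * i + 1) *\<^sub>R f u)"

definition odd_moment_sum :: "(real \<Rightarrow> 'a::banach) \<Rightarrow> nat \<Rightarrow> real \<Rightarrow> 'a" where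
  "odd_moment_sum f j s = (\<Sum>i\<le>j. (real (j choose i) * (1 - s\<^sup>2) ^ (j - i)) *\<^sub>R odd_moment_tail f i (1 - s))"

lemma G0_eq_odd_moment_sum:
  assumes f: "continuous_on {0..1} f" and s: "0 \<le> s" "s \<le> 1"
  shows "G0 f j s = odd_moment_sum f j s"
proof -
  have "G0 f j s = integral {1 - s..1}
      (\<lambda>u. \<Sum>i\<le>j. (real (j choose i) * (1 - s\<^sup>2) ^ (j - i)) *\<^sub>R (u ^ (2 * i + 1) *\<^sub>R f u))"
    unfolding G0_def
  proof (rule integral_cong)
    fix u
    have "u * (u\<^sup>2 + 1 - s\<^sup>2) ^ j = (\<Sum>i\<le>j. real (j choose i) * (1 - s\<^sup>2) ^ (j - i) * u ^ (2 * i + 1))"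
      using odd_power_binomial[of u "1 - s\<^sup>2" j] by (simp add: add_diff_eq)
    then show "complex_of_real (u * (u\<^sup>2 + 1 - s\<^sup>2) ^ j) * f u
        = (\<Sum>i\<le>j. (real (j choose i) * (1 - s\<^sup>2) ^ (j - i)) *\<^sub>R (u ^ (2 * i + 1) *\<^sub>R f u))"
      by (simp only: scaleR_conv_of_real [symmetric] scaleR_sum_left scaleR_scaleR)
  qed
  also have "\<dots> = (\<Sum>i\<le>j. integral {1 - s..1}
      (\<lambda>u. (real (j choose i) * (1 - s\<^sup>2) ^ (j - i)) *\<^sub>R (u ^ (2 * i + 1) *\<^sub>R f u)))"
    using s by (intro integral_sum finite_atMost integrable_cmul integrable_continuous_interval
        continuous_intros continuous_on_subset[OF f]) auto
  finally show ?thesis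
    by (simp only: odd_moment_sum_def odd_moment_tail_def integral_cmul)
qed

lemma odd_moment_tail_has_vector_derivative:
  assumes f: "continuous_on {0..1} f" and x: "0 < x" "x < 1"
  shows "(odd_moment_tail f i has_vector_derivative - (x ^ (2 * i + 1) *\<^sub>R f x)) (at x)"
proof -
  have "(odd_moment_tail f i has_vector_derivative - (x ^ (2 * i + 1) *\<^sub>R f x)) (at x within {0..1})"
    unfolding odd_moment_tail_def [abs_def]
    using x by (intro integral_has_vector_derivative' continuous_intros f) auto
  moreover have "at x within {0..1} = at x"
    using x by (intro at_within_interior) auto
  ultimately show ?thesis
    by simp
qed

lemma odd_moment_sum_has_vector_derivative:
  assumes f: "continuous_on {0..1} f" and s: "0 < s" "s < 1"
  shows "(odd_moment_sum f j has_vector_derivative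
      (2 ^ j * (1 - s) ^ (j + 1)) *\<^sub>R f (1 - s) + (- (2 * real j * s)) *\<^sub>R odd_moment_sum f (j - 1) s) (at s)"
proof -
  define b where "b i s = real (j choose i) * (1 - s\<^sup>2) ^ (j - i)" for i s
  define T where "T i s = odd_moment_tail f i (1 - s)" for i s
  have "(T i has_vector_derivative (1 - s) ^ (2 * i + 1) *\<^sub>R f (1 - s)) (at s)" for i
  proof -
    have "((odd_moment_tail f i \<circ> (\<lambda>s. 1 - s)) has_vector_derivative
        (- 1) *\<^sub>R - ((1 - s) ^ (2 * i + 1) *\<^sub>R f (1 - s))) (at s)"
      using s by (intro vector_diff_chain_at odd_moment_tail_has_vector_derivative f)
        (auto intro!: derivative_eq_intros)
    then show ?thesis
      by (simp add: T_def [abs_def] o_def)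
  qed
  moreover have "(b i has_real_derivative
      real (j choose i) * real (j - i) * (1 - s\<^sup>2) ^ (j - 1 - i) * (- 2 * s)) (at s)" for i
    unfolding b_def by (auto intro!: derivative_eq_intros simp: add.commute)
  ultimately have deriv: "(odd_moment_sum f j has_vector_derivative
      (\<Sum>i\<le>j. b i s *\<^sub>R ((1 - s) ^ (2 * i + 1) *\<^sub>R f (1 - s)))
      + (\<Sum>i\<le>j. (real (j choose i) * real (j - i) * (1 - s\<^sup>2) ^ (j - 1 - i) * (- 2 * s)) *\<^sub>R T i s)) (at s)"
    unfolding odd_moment_sum_def [abs_def] b_def [symmetric] T_def [symmetric] sum.distrib [symmetric]
    by (intro has_vector_derivative_sum has_vector_derivative_scaleR)
  have boundary: "(\<Sum>i\<le>j. b i s *\<^sub>R ((1 - s) ^ (2 * i + 1) *\<^sub>R f (1 - s)))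
      = (2 ^ j * (1 - s) ^ (j + 1)) *\<^sub>R f (1 - s)"
  proof -
    have "(\<Sum>i\<le>j. b i s * (1 - s) ^ (2 * i + 1)) = (1 - s) * ((1 - s)\<^sup>2 + (1 - s\<^sup>2)) ^ j"
      unfolding odd_power_binomial b_def by simp
    also have "\<dots> = 2 ^ j * (1 - s) ^ (j + 1)"
      by (simp add: power2_eq_square algebra_simps flip: power_mult_distrib)
    finally show ?thesis
      by (simp add: scaleR_sum_left [symmetric])
  qed
  have "(\<Sum>i\<le>j. (real (j choose i) * real (j - i) * (1 - s\<^sup>2) ^ (j - 1 - i) * (- 2 * s)) *\<^sub>R T i s)
      = (\<Sum>i\<le>j. (real (j choose i) * real (j - i)) *\<^sub>R ((- 2 * s * (1 - s\<^sup>2) ^ (j - 1 - i)) *\<^sub>R T i s))"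
    by (intro sum.cong refl) (simp add: mult_ac)
  also have "\<dots> = real j *\<^sub>R (\<Sum>i\<le>j - 1. real ((j - 1) choose i) *\<^sub>R
      ((- 2 * s * (1 - s\<^sup>2) ^ (j - 1 - i)) *\<^sub>R T i s))"
    by (rule sum_binomial_absorb_comp)
  also have "\<dots> = (- (2 * real j * s)) *\<^sub>R odd_moment_sum f (j - 1) s"
    by (simp add: odd_moment_sum_def T_def scaleR_sum_right mult_ac)
  finally have interior: "(\<Sum>i\<le>j. (real (j choose i) * real (j - i) * (1 - s\<^sup>2) ^ (j - 1 - i) * (- 2 * s))
      *\<^sub>R T i s) = (- (2 * real j * s)) *\<^sub>R odd_moment_sum f (j - 1) s" .
  show ?thesis
    using deriv unfolding boundary interior .
qed

lemma G0_has_vector_derivative: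
  assumes f: "continuous_on {0..1} f" and s: "0 < s" "s < 1"
  shows "(G0 f j has_vector_derivative
      (2 ^ j * (1 - s) ^ (j + 1)) *\<^sub>R f (1 - s) - (2 * real j * s) *\<^sub>R G0 f (j - 1) s) (at s)"
proof -
  have "odd_moment_sum f j y = G0 f j y" if "y \<in> {0<..<1}" for y
    using that by (simp add: G0_eq_odd_moment_sum[OF f])
  from has_vector_derivative_transform_within_open[OF
      odd_moment_sum_has_vector_derivative[OF f s] open_greaterThanLessThan _ this] s
  show ?thesis
    using s by (simp add: G0_eq_odd_moment_sum[OF f])
qed

definition expansion_coeff :: "real \<Rightarrow> nat \<Rightarrow> nat \<Rightarrow> nat \<Rightarrow> real" where
  "expansion_coeff t m \<nu> l = 1 / (2 ^ (\<nu> - m) * fact m)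
     * real ((l + 1) choose (\<nu> + 1)) * real ((l + \<nu> - m) choose (\<nu> - m))
     * (1 / t ^ l) * ((1 - t) ^ (\<nu> + 1) / t ^ (\<nu> - m))"

lemma bessel_leibniz_coeff:
  assumes t: "t \<noteq> 0" and l: "l = m + p + q"
  shows "t * ((-1) ^ q * bessel_coeff l q / t ^ (1 + l + q))
      * (real ((m + p) choose p) * pochhammer (- of_nat (l + 1)) p * (1 - t) ^ (m + q + 1) * (-1) ^ m)
    = (-1) ^ l * fact l * expansion_coeff t m (m + q) l"
proof -
  have "fact q * (bessel_coeff l q * fact (m + p) * 2 ^ q) = fact q * (fact l * real ((l + q) choose q))"
    using bessel_coeff_fact[of q l] binomial_fact[of q "l + q", where 'a=real] l
    by (simp add: field_simps)
  then have closed: "bessel_coeff l q * fact (m + p) * 2 ^ q = fact l * real ((l + q) choose q)"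
    by simp
  have binomial: "real ((m + p) choose p) * fact p * fact m = fact (m + p)"
    using binomial_fact[of p "m + p", where 'a=real] by (simp add: field_simps)
  have key: "bessel_coeff l q * real ((m + p) choose p) * fact p
      = fact l * real ((l + q) choose q) / (2 ^ q * fact m)"
    unfolding closed [symmetric] binomial [symmetric] by (simp add: field_simps)
  have "(l + 1) choose p = (l + 1) choose (m + q + 1)"
    using l by (subst binomial_symmetric) auto
  then have poch: "pochhammer (- of_nat (l + 1)) p = (-1) ^ p * fact p * real ((l + 1) choose (m + q + 1))"
    by (simp only: pochhammer_minus_of_nat)
  have signs: "(-1) ^ q * (-1) ^ p * (-1) ^ m = ((-1) ^ l :: real)"
    using l by (simp add: power_add)
  have powers: "t / t ^ (1 + l + q) = 1 / t ^ l * (1 / t ^ q)"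
    using t by (simp add: power_add)
  have "t * ((-1) ^ q * bessel_coeff l q / t ^ (1 + l + q))
      * (real ((m + p) choose p) * pochhammer (- of_nat (l + 1)) p * (1 - t) ^ (m + q + 1) * (-1) ^ m)
    = ((-1) ^ q * (-1) ^ p * (-1) ^ m) * (bessel_coeff l q * real ((m + p) choose p) * fact p)
      * real ((l + 1) choose (m + q + 1)) * (1 - t) ^ (m + q + 1) * (t / t ^ (1 + l + q))"
    by (simp only: poch divide_inverse mult_ac)
  also have "\<dots> = (-1) ^ l * (fact l * real ((l + q) choose q) / (2 ^ q * fact m))
      * real ((l + 1) choose (m + q + 1)) * (1 - t) ^ (m + q + 1) * (1 / t ^ l * (1 / t ^ q))"
    by (simp only: signs key powers)
  also have "\<dots> = (-1) ^ l * fact l * expansion_coeff t m (m + q) l"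
    by (simp add: expansion_coeff_def field_simps)
  finally show ?thesis .
qed

locale smooth_profile =
  fixes f :: "real \<Rightarrow> complex" and fd :: "nat \<Rightarrow> real \<Rightarrow> complex"
  assumes fd0: "\<And>x. x \<ge> 0 \<Longrightarrow> fd 0 x = f x"
    and fd_deriv: "\<And>n x. x \<ge> 0 \<Longrightarrow> (fd n has_vector_derivative fd (Suc n) x) (at x within {0..})"
begin

lemma f_continuous: "continuous_on {0..1} f"
proof -
  have "continuous_on {0..} (fd 0)"
    using fd_deriv by (intro continuous_on_vector_derivative) auto
  then have "continuous_on {0..1} (fd 0)"
    by (rule continuous_on_subset) auto
  then show ?thesis
    by (rule continuous_on_eq) (simp add: fd0)
qed

lemma reflected_fd_has_vector_derivative:
  assumes s: "s < 1"
  shows "((\<lambda>s. (-1) ^ q *\<^sub>R fd q (1 - s)) has_vector_derivative (-1) ^ Suc q *\<^sub>R fd (Suc q) (1 - s)) (at s)"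
proof -
  have "at (1 - s) within {0..} = at (1 - s)"
    using s by (intro at_within_interior) auto
  then have "(fd q has_vector_derivative fd (Suc q) (1 - s)) (at (1 - s))"
    using fd_deriv[of "1 - s" q] s by simp
  then have "((fd q \<circ> (\<lambda>s. 1 - s)) has_vector_derivative (-1) *\<^sub>R fd (Suc q) (1 - s)) (at s)"
    by (intro vector_diff_chain_at) (auto intro!: derivative_eq_intros)
  then show ?thesis
    by (auto intro!: derivative_eq_intros simp: o_def)
qed

(* pochhammer (-(j+1)) p (1 - s)^(j+1-p) and (-1)^q fd q (1 - s) are the derivatives of (1 - s)^(j+1)
   and of f(1 - s), so g_deriv j n is the n-th derivative of g_j(s) = (1 - s)^(j+1) f(1 - s),
   and Dpow_h j k is D^k h_j for h_j(s) = g_j(s) / s. *)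
definition g_deriv :: "nat \<Rightarrow> nat \<Rightarrow> real \<Rightarrow> complex" where
  "g_deriv j = leibniz_sum (\<lambda>p s. pochhammer (- of_nat (j + 1)) p * (1 - s) ^ (j + 1 - p))
     (\<lambda>q s. (-1) ^ q *\<^sub>R fd q (1 - s))"

lemma g_deriv_has_vector_derivative:
  "s < 1 \<Longrightarrow> (g_deriv j n has_vector_derivative g_deriv j (Suc n) s) (at s)"
  unfolding g_deriv_def
  by (intro leibniz_sum_has_vector_derivative pochhammer_power_has_real_derivative
      reflected_fd_has_vector_derivative)

definition Dpow_h :: "nat \<Rightarrow> nat \<Rightarrow> real \<Rightarrow> complex" where
  "Dpow_h j = bessel_sum (g_deriv j)"

lemma Dpow_h_has_vector_derivative:
  "0 < s \<Longrightarrow> s < 1 \<Longrightarrow> (Dpow_h j k has_vector_derivative s *\<^sub>R Dpow_h j (Suc k) s) (at s)"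
  unfolding Dpow_h_def by (intro bessel_sum_has_vector_derivative g_deriv_has_vector_derivative) auto

lemma Dpow_h_0: "s \<noteq> 0 \<Longrightarrow> s \<le> 1 \<Longrightarrow> s *\<^sub>R Dpow_h j 0 s = (1 - s) ^ (j + 1) *\<^sub>R f (1 - s)"
  by (simp add: Dpow_h_def bessel_sum_def g_deriv_def leibniz_sum_def fd0)

(* On (0, 1), Dpow_G j k = D^k G_{0,j}; here 2^i pochhammer (-j) i = (-2)^i j! / (j - i)!. *)
definition Dpow_G :: "nat \<Rightarrow> nat \<Rightarrow> real \<Rightarrow> complex" where
  "Dpow_G j k s = (\<Sum>i<k. (2 ^ j * pochhammer (- of_nat j) i) *\<^sub>R Dpow_h (j - i) (k - 1 - i) s)
     + (2 ^ k * pochhammer (- of_nat j) k) *\<^sub>R G0 f (j - k) s"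

lemma Dpow_G_0: "Dpow_G j 0 s = G0 f j s"
  by (simp add: Dpow_G_def)

lemma Dpow_G_has_vector_derivative:
  assumes s: "0 < s" "s < 1"
  shows "(Dpow_G j k has_vector_derivative s *\<^sub>R Dpow_G j (Suc k) s) (at s)"
proof -
  define a where "a i = 2 ^ j * pochhammer (- of_nat j :: real) i" for i
  define b where "b k = 2 ^ k * pochhammer (- of_nat j :: real) k" for k
  have Dpow_G_eq: "Dpow_G j k = (\<lambda>s. (\<Sum>i<k. a i *\<^sub>R Dpow_h (j - i) (k - 1 - i) s) + b k *\<^sub>R G0 f (j - k) s)" for k
    by (simp add: Dpow_G_def a_def b_def fun_eq_iff)
  have "(Dpow_G j k has_vector_derivative
      (\<Sum>i<k. a i *\<^sub>R (s *\<^sub>R Dpow_h (j - i) (Suc (k - 1 - i)) s))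
      + b k *\<^sub>R ((2 ^ (j - k) * (1 - s) ^ (j - k + 1)) *\<^sub>R f (1 - s)
                 - (2 * real (j - k) * s) *\<^sub>R G0 f (j - k - 1) s)) (at s)"
    unfolding Dpow_G_eq
    by (intro has_vector_derivative_add has_vector_derivative_sum Dpow_h_has_vector_derivative
        G0_has_vector_derivative f_continuous s
        bounded_linear.has_vector_derivative[OF bounded_linear_scaleR_right])
  moreover have "(\<Sum>i<k. a i *\<^sub>R (s *\<^sub>R Dpow_h (j - i) (Suc (k - 1 - i)) s))
      + b k *\<^sub>R ((2 ^ (j - k) * (1 - s) ^ (j - k + 1)) *\<^sub>R f (1 - s)
                 - (2 * real (j - k) * s) *\<^sub>R G0 f (j - k - 1) s)
      = s *\<^sub>R Dpow_G j (Suc k) s"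
  proof -
    have sum: "(\<Sum>i<k. a i *\<^sub>R (s *\<^sub>R Dpow_h (j - i) (Suc (k - 1 - i)) s))
        = s *\<^sub>R (\<Sum>i<k. a i *\<^sub>R Dpow_h (j - i) (k - i) s)"
      unfolding scaleR_sum_right
      by (intro sum.cong refl) (auto simp: Suc_diff_Suc mult.commute)
    have boundary: "(2 ^ (j - k) * (1 - s) ^ (j - k + 1)) *\<^sub>R f (1 - s)
        = s *\<^sub>R (2 ^ (j - k) *\<^sub>R Dpow_h (j - k) 0 s)"
    proof -
      have "s *\<^sub>R (2 ^ (j - k) *\<^sub>R Dpow_h (j - k) 0 s) = 2 ^ (j - k) *\<^sub>R (s *\<^sub>R Dpow_h (j - k) 0 s)"
        by (rule scaleR_left_commute)
      then show ?thesis
        using s by (simp only: Dpow_h_0) simp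
    qed
    have a_k: "a k = b k * 2 ^ (j - k)"
      by (cases "k \<le> j")
        (simp_all add: a_def b_def pochhammer_of_nat_eq_0_lemma flip: power_add)
    have b_Suc: "b (Suc k) = - (b k * (2 * real (j - k)))"
      by (simp add: b_def pochhammer_minus_of_nat_Suc)
    have Dpow_G_Suc: "Dpow_G j (Suc k) s = (\<Sum>i<k. a i *\<^sub>R Dpow_h (j - i) (k - i) s)
        + a k *\<^sub>R Dpow_h (j - k) 0 s + b (Suc k) *\<^sub>R G0 f (j - k - 1) s"
      by (simp add: Dpow_G_eq)
    show ?thesis
      unfolding Dpow_G_Suc sum boundary a_k b_Suc
      by (simp add: algebra_simps)
  qed
  ultimately show ?thesis
    by simp
qed

lemma Dpow_G_Suc_self: "Dpow_G j (Suc j) s = (\<Sum>i\<le>j. (2 ^ j * pochhammer (- of_nat j) i) *\<^sub>R Dpow_h (j - i) (j - i) s)"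
  by (simp add: Dpow_G_def lessThan_Suc_atMost pochhammer_of_nat_eq_0_lemma)

lemma Dpow_h_diag_expansion:
  assumes t: "t \<noteq> 0"
  shows "t *\<^sub>R Dpow_h l l t
    = ((-1) ^ l * fact l) *\<^sub>R (\<Sum>m = 0..l. \<Sum>\<nu> = m..l. expansion_coeff t m \<nu> l *\<^sub>R fd m (1 - t))"
proof -
  define K where "K q p = t * ((-1) ^ q * bessel_coeff l q / t ^ (1 + l + q))
    * (real ((l - q) choose p) * pochhammer (- of_nat (l + 1)) p * (1 - t) ^ (l + 1 - p) * (-1) ^ (l - q - p))"
    for q p
  have K: "K q p = (-1) ^ l * fact l * expansion_coeff t (l - q - p) (l - p) l" if "p + q \<le> l" for q p
  proof -
    define m where "m = l - q - p"
    have "l = m + p + q" "l - q = m + p" "l + 1 - p = m + q + 1" "l - p = m + q"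
      using that by (auto simp: m_def)
    then show ?thesis
      using bessel_leibniz_coeff[OF t, of l m p q] unfolding K_def m_def [symmetric] by simp
  qed
  have "t *\<^sub>R Dpow_h l l t = (\<Sum>q\<le>l. \<Sum>p\<le>l - q. K q p *\<^sub>R fd (l - q - p) (1 - t))"
    unfolding Dpow_h_def bessel_sum_def g_deriv_def leibniz_sum_def scaleR_sum_right K_def
    by (intro sum.cong refl) (simp add: ac_simps)
  also have "\<dots> = (\<Sum>(q, p) \<in> (SIGMA q:{..l}. {..l - q}). K q p *\<^sub>R fd (l - q - p) (1 - t))"
    by (simp add: sum.Sigma)
  also have "\<dots> = (\<Sum>(m, \<nu>) \<in> (SIGMA m:{0..l}. {m..l}).
      ((-1) ^ l * fact l) *\<^sub>R (expansion_coeff t m \<nu> l *\<^sub>R fd m (1 - t)))"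
    by (rule sum.reindex_bij_witness[where i="\<lambda>(m, \<nu>). (\<nu> - m, l - \<nu>)" and j="\<lambda>(q, p). (l - q - p, l - p)"])
      (auto simp: K)
  also have "\<dots> = ((-1) ^ l * fact l) *\<^sub>R (\<Sum>m = 0..l. \<Sum>\<nu> = m..l. expansion_coeff t m \<nu> l *\<^sub>R fd m (1 - t))"
    by (simp add: sum.Sigma scaleR_sum_right split_beta)
  finally show ?thesis .
qed

lemma Dpow_G_Suc_self_expansion:
  assumes t: "t \<noteq> 0"
  shows "t *\<^sub>R Dpow_G r (Suc r) t = (2 ^ r * (-1) ^ r * fact r) *\<^sub>R
    (\<Sum>m = 0..r. \<Sum>\<nu> = m..r. \<Sum>l = \<nu>..r. expansion_coeff t m \<nu> l *\<^sub>R fd m (1 - t))"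
proof -
  have "t *\<^sub>R Dpow_G r (Suc r) t = (\<Sum>i\<le>r. (2 ^ r * pochhammer (- of_nat r) i) *\<^sub>R (t *\<^sub>R Dpow_h (r - i) (r - i) t))"
    unfolding Dpow_G_Suc_self scaleR_sum_right by (intro sum.cong refl) (rule scaleR_left_commute)
  also have "\<dots> = (\<Sum>l\<le>r. (2 ^ r * pochhammer (- of_nat r) (r - l)) *\<^sub>R (t *\<^sub>R Dpow_h l l t))"
    by (rule sum.reindex_bij_witness[where i="\<lambda>i. r - i" and j="\<lambda>i. r - i"]) auto
  also have "\<dots> = (\<Sum>l\<le>r. (2 ^ r * (-1) ^ r * fact r) *\<^sub>R
      (\<Sum>m = 0..l. \<Sum>\<nu> = m..l. expansion_coeff t m \<nu> l *\<^sub>R fd m (1 - t)))"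
    by (intro sum.cong refl)
      (simp add: Dpow_h_diag_expansion[OF t] mult.assoc pochhammer_minus_of_nat_diff_fact)
  also have "\<dots> = (2 ^ r * (-1) ^ r * fact r) *\<^sub>R
      (\<Sum>m = 0..r. \<Sum>\<nu> = m..r. \<Sum>l = \<nu>..r. expansion_coeff t m \<nu> l *\<^sub>R fd m (1 - t))"
    by (simp only: scaleR_sum_right [symmetric] sum_simplex_reorder)
  finally show ?thesis .
qed

end

theorem lemma3p5:
  fixes f :: "real \<Rightarrow> complex" and fd :: "nat \<Rightarrow> real \<Rightarrow> complex"
    and \<rho> t :: real and r :: nat
  assumes fd0: "\<And>x. x \<ge> 0 \<Longrightarrow> fd 0 x = f x"
    and fd_deriv: "\<And>n x. x \<ge> 0 \<Longrightarrow>
        (fd n has_vector_derivative fd (Suc n) x) (at x within {0..})"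
    and supp: "\<And>u. u \<ge> 0 \<Longrightarrow> u > \<rho> \<Longrightarrow> f u = 0"
    and rho: "\<rho> < 1"
    and t: "0 < t" "t < 1"
  shows "(((Dop ^^ r) (G0 f r)) has_vector_derivative
     (complex_of_real (2 ^ r * (-1) ^ r * fact r) *
      (\<Sum>m = 0..r. \<Sum>\<nu> = m..r. \<Sum>l = \<nu>..r.
         complex_of_real (1 / (2 ^ (\<nu> - m) * fact m)
           * real ((l + 1) choose (\<nu> + 1)) * real ((l + \<nu> - m) choose (\<nu> - m))
           * (1 / t ^ l) * ((1 - t) ^ (\<nu> + 1) / t ^ (\<nu> - m)))
         * fd m (1 - t)))) (at t)"
proof -
  interpret smooth_profile f fd
    using fd0 fd_deriv by unfold_locales
  have "t \<noteq> 0"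
    using t by simp
  have "((Dop ^^ r) (G0 f r) has_vector_derivative t *\<^sub>R Dpow_G r (Suc r) t) (at t)"
    by (rule Dop_funpow_has_vector_derivative[where S="{0<..<1}"])
      (use t in \<open>auto simp: Dpow_G_0 intro: Dpow_G_has_vector_derivative\<close>)
  then show ?thesis
    unfolding Dpow_G_Suc_self_expansion[OF \<open>t \<noteq> 0\<close>]
    by (simp only: scaleR_conv_of_real expansion_coeff_def)
qed

end
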